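(* Let $n \geq 2k \geq 4$ and let $\mathcal F, \mathcal G \subset \binom{[n]}{k}$ be non-trivial, cross-intersecting, initial families. For $P \subset [k+1]$ let $\mathcal F(P) = \{F \setminus P : F \in \mathcal F,\ F \cap [k+1] = P\}$ and $\mathcal G(P) = \{G \setminus P : G \in \mathcal G,\ G \cap [k+1] = P\}$. Let $2 \leq i \leq k/2$ and let $P, Q \in \binom{[k+1]}{i}$ be disjoint. Then $$|\mathcal F(P)| + |\mathcal G(Q)| + |\mathcal G([k+1]\setminus P)| + |\mathcal F([k+1]\setminus Q)| \leq \binom{n-k-1}{k-i} + \binom{n-k-1}{i-1}.$$
   Context: Families are cross-intersecting if every member of one meets every member of the other; a non-empty family is non-trivial if the intersection of all its members is empty. For $k$-sets $A=\{x_1<\dots<x_k\}$, $B=\{y_1<\dots<y_k\}$, $A\prec B$ means $x_i\le y_i$ for all $i$; a family is initial if $A\prec B\in\mathcal F$ implies $A\in\mathcal F$. *)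

theory Defs
  imports Main
begin

definition ksets :: "nat set \<Rightarrow> nat \<Rightarrow> nat set set" where
  "ksets X k = {A. A \<subseteq> X \<and> card A = k}"

definition shift_le :: "nat set \<Rightarrow> nat set \<Rightarrow> bool" where
  "shift_le A B \<longleftrightarrow> finite A \<and> finite B \<and> card A = card B \<and>
     (\<forall>i < card A. sorted_list_of_set A ! i \<le> sorted_list_of_set B ! i)"

definition cross_intersecting :: "nat set set \<Rightarrow> nat set set \<Rightarrow> bool" where
  "cross_intersecting F G \<longleftrightarrow> (\<forall>A\<in>F. \<forall>B\<in>G. A \<inter> B \<noteq> {})"

definition non_trivial :: "nat set set \<Rightarrow> bool" where
  "non_trivial F \<longleftrightarrow> F \<noteq> {} \<and> \<Inter>F = {}"

definition initial :: "nat \<Rightarrow> nat \<Rightarrow> nat set set \<Rightarrow> bool" where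
  "initial n k F \<longleftrightarrow> (\<forall>A \<in> ksets {1..n} k. \<forall>B\<in>F. shift_le A B \<longrightarrow> A \<in> F)"

definition restr :: "nat \<Rightarrow> nat set set \<Rightarrow> nat set \<Rightarrow> nat set set" where
  "restr k F P = {A - P | A. A \<in> F \<and> A \<inter> {1..k+1} = P}"

end

theory Submission
  imports Defs "HOL.Binomial_Plus"
begin

text \<open>
  Cut every member of F and G at [k+1]: the tails lie in R = {k+2..n}, where |R| = m = n-k-1.
  With a = k-i and b = i-1, the families F(P) and G(Q) consist of a-subsets of R, and
  G([k+1]-P) and F([k+1]-Q) of b-subsets. As P is disjoint from [k+1]-P, the families F(P) and
  G([k+1]-P) are cross-intersecting, and so are G(Q) and F([k+1]-Q); as Q \<subseteq> [k+1]-P,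
  initiality of G puts every b-subset of a member of G(Q) into G([k+1]-P). Measured by the
  densities |A|/C(m,a) and |B|/C(m,b), double counting shows that the densities of two
  cross-intersecting families add up to at most 1, and that passing to the b-shadow does not
  decrease the density. These three linear inequalities, together with C(m,b) \<le> C(m,a),
  bound the sum by C(m,a) + C(m,b).
\<close>

lemma finite_ksets: "finite R \<Longrightarrow> finite (ksets R a)"
  unfolding ksets_def by auto

lemma card_ksets: "finite R \<Longrightarrow> card (ksets R a) = card R choose a"
  unfolding ksets_def by (rule n_subsets)

lemma card_ksets_disjoint:
  assumes "finite R" "S \<subseteq> R"
  shows "card {T \<in> ksets R b. S \<inter> T = {}} = (card R - card S) choose b"
proof -
  have "{T \<in> ksets R b. S \<inter> T = {}} = ksets (R - S) b" unfolding ksets_def by auto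
  then show ?thesis using assms card_ksets[of "R - S" b]
    by (simp add: card_Diff_subset finite_subset)
qed

lemma card_ksets_supersets:
  assumes "finite R" "T \<subseteq> R" "card T = b" "b \<le> a"
  shows "card {S \<in> ksets R a. T \<subseteq> S} = (card R - b) choose (a - b)"
proof -
  have "finite T" using assms finite_subset by blast
  have "bij_betw (\<lambda>U. U \<union> T) (ksets (R - T) (a - b)) {S \<in> ksets R a. T \<subseteq> S}"
  proof (rule bij_betw_byWitness[where f' = "\<lambda>S. S - T"])
    show "(\<lambda>U. U \<union> T) ` ksets (R - T) (a - b) \<subseteq> {S \<in> ksets R a. T \<subseteq> S}"
    proof (rule image_subsetI)
      fix U assume U: "U \<in> ksets (R - T) (a - b)"
      then have "finite U" "U \<inter> T = {}" using assms(1) finite_subset by (auto simp: ksets_def)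
      then show "U \<union> T \<in> {S \<in> ksets R a. T \<subseteq> S}"
        using U assms \<open>finite T\<close> by (auto simp: ksets_def card_Un_disjoint)
    qed
    show "(\<lambda>S. S - T) ` {S \<in> ksets R a. T \<subseteq> S} \<subseteq> ksets (R - T) (a - b)"
      using assms \<open>finite T\<close> by (auto simp: ksets_def card_Diff_subset)
  qed (auto simp: ksets_def)
  then have "card {S \<in> ksets R a. T \<subseteq> S} = card (ksets (R - T) (a - b))"
    by (simp add: bij_betw_same_card)
  then show ?thesis
    using assms \<open>finite T\<close> by (simp add: card_ksets card_Diff_subset)
qed

lemma card_Sigma_const:
  assumes "finite X" "\<And>x. x \<in> X \<Longrightarrow> finite (Y x) \<and> card (Y x) = c"
  shows "card (SIGMA x:X. Y x) = card X * c"
  using assms by (simp add: card_SigmaI)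

lemma binomial_mult_complement:
  assumes "a + b \<le> m"
  shows "(m choose a) * ((m - a) choose b) = (m choose b) * ((m - b) choose a)"
proof -
  have "(m choose a) * ((m - a) choose b) = (m choose (a + b)) * ((a + b) choose a)"
    using choose_mult[of a "a + b" m] assms by simp
  also have "\<dots> = (m choose (a + b)) * ((a + b) choose b)"
    using binomial_symmetric[of a "a + b"] by simp
  also have "\<dots> = (m choose b) * ((m - b) choose a)"
    using choose_mult[of b "a + b" m] assms by simp
  finally show ?thesis .
qed

lemma binomial_le_binomial:
  assumes "b \<le> a" "a + b \<le> m"
  shows "m choose b \<le> m choose a"
proof (cases "2 * a \<le> m")
  case True
  then show ?thesis using assms by (intro binomial_mono) auto
next
  case False
  then have "m choose b \<le> m choose (m - a)" using assms by (intro binomial_mono) auto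
  then show ?thesis using assms binomial_symmetric[of a m] by simp
qed

lemma cross_intersecting_commute: "cross_intersecting F G \<longleftrightarrow> cross_intersecting G F"
  unfolding cross_intersecting_def by blast

text \<open>Count the disjoint pairs (T, S) with T \<in> B and S an a-set: cross-intersection
  forces S \<notin> A.\<close>

lemma cross_intersecting_double_count:
  assumes "finite R" "A \<subseteq> ksets R a" "B \<subseteq> ksets R b" "cross_intersecting A B"
  shows "card B * ((card R - b) choose a) \<le> ((card R choose a) - card A) * ((card R - a) choose b)"
proof -
  let ?pairs_B = "SIGMA T:B. {S \<in> ksets R a. T \<inter> S = {}}"
  let ?pairs_A = "SIGMA S:ksets R a - A. {T \<in> ksets R b. S \<inter> T = {}}"
  have "finite A" "finite B" using assms finite_ksets finite_subset by metis+
  have "card ?pairs_B \<le> card ?pairs_A"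
  proof (rule card_inj_on_le[where f = "\<lambda>(T, S). (S, T)"])
    show "(\<lambda>(T, S). (S, T)) ` ?pairs_B \<subseteq> ?pairs_A"
      using assms(3,4) by (auto simp: cross_intersecting_def)
  qed (use assms(1) in \<open>auto simp: inj_on_def finite_ksets\<close>)
  moreover have "card ?pairs_B = card B * ((card R - b) choose a)"
  proof (rule card_Sigma_const[OF \<open>finite B\<close>])
    fix T assume "T \<in> B"
    then show "finite {S \<in> ksets R a. T \<inter> S = {}} \<and>
          card {S \<in> ksets R a. T \<inter> S = {}} = (card R - b) choose a"
      using assms(1,3) card_ksets_disjoint[of R T a] by (auto simp: ksets_def)
  qed
  moreover have "card ?pairs_A = card (ksets R a - A) * ((card R - a) choose b)"
  proof (rule card_Sigma_const)
    fix S assume "S \<in> ksets R a - A"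
    then show "finite {T \<in> ksets R b. S \<inter> T = {}} \<and>
          card {T \<in> ksets R b. S \<inter> T = {}} = (card R - a) choose b"
      using assms(1) card_ksets_disjoint[of R S b] by (auto simp: ksets_def)
  qed (simp add: assms(1) finite_ksets)
  moreover have "card (ksets R a - A) = (card R choose a) - card A"
    using assms \<open>finite A\<close> by (simp add: card_Diff_subset card_ksets)
  ultimately show ?thesis by simp
qed

lemma cross_intersecting_card_le:
  assumes "finite R" "A \<subseteq> ksets R a" "B \<subseteq> ksets R b" "cross_intersecting A B"
    and "a + b \<le> card R"
  shows "card B * (card R choose a) + card A * (card R choose b) \<le> (card R choose a) * (card R choose b)"
proof -
  define m where "m = card R"
  have "card A \<le> m choose a"
    using assms card_mono[OF finite_ksets] card_ksets unfolding m_def by metis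
  have "card B * (m choose a) * ((m - b) choose a) = (m choose a) * (card B * ((m - b) choose a))"
    by simp
  also have "\<dots> \<le> (m choose a) * (((m choose a) - card A) * ((m - a) choose b))"
    using cross_intersecting_double_count[OF assms(1-4)] unfolding m_def by simp
  also have "\<dots> = ((m choose a) - card A) * (m choose b) * ((m - b) choose a)"
    using binomial_mult_complement[of a b m] assms(5) unfolding m_def by (simp add: ac_simps)
  finally have "card B * (m choose a) \<le> ((m choose a) - card A) * (m choose b)"
    using assms(5) unfolding m_def by (simp del: mult_le_cancel2)
  moreover have "card A * (m choose b) \<le> (m choose a) * (m choose b)"
    using \<open>card A \<le> m choose a\<close> by simp
  ultimately show ?thesis
    unfolding m_def[symmetric] diff_mult_distrib by linarith
qed

text \<open>Count the pairs (S, T) with S \<in> A and T a b-subset of S: every such T lies in B.\<close>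

lemma shadow_double_count:
  assumes "finite R" "A \<subseteq> ksets R a" "B \<subseteq> ksets R b" "b \<le> a"
    and shadow: "\<And>S T. S \<in> A \<Longrightarrow> T \<subseteq> S \<Longrightarrow> card T = b \<Longrightarrow> T \<in> B"
  shows "card A * (a choose b) \<le> card B * ((card R - b) choose (a - b))"
proof -
  let ?pairs_A = "SIGMA S:A. {T. T \<subseteq> S \<and> card T = b}"
  let ?pairs_B = "SIGMA T:B. {S \<in> ksets R a. T \<subseteq> S}"
  have "finite A" "finite B" using assms finite_ksets finite_subset by metis+
  have "card ?pairs_A \<le> card ?pairs_B"
  proof (rule card_inj_on_le[where f = "\<lambda>(S, T). (T, S)"])
    show "(\<lambda>(S, T). (T, S)) ` ?pairs_A \<subseteq> ?pairs_B" using shadow assms(2) by auto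
  qed (use \<open>finite B\<close> assms(1) in \<open>auto simp: inj_on_def finite_ksets\<close>)
  moreover have "card ?pairs_A = card A * (a choose b)"
  proof (rule card_Sigma_const[OF \<open>finite A\<close>])
    fix S assume "S \<in> A"
    then have "finite S" "card S = a"
      using assms(1,2) by (auto simp: ksets_def intro: finite_subset)
    then show "finite {T. T \<subseteq> S \<and> card T = b} \<and>
          card {T. T \<subseteq> S \<and> card T = b} = a choose b"
      using n_subsets[of S b] by simp
  qed
  moreover have "card ?pairs_B = card B * ((card R - b) choose (a - b))"
  proof (rule card_Sigma_const[OF \<open>finite B\<close>])
    fix T assume "T \<in> B"
    then show "finite {S \<in> ksets R a. T \<subseteq> S} \<and>
          card {S \<in> ksets R a. T \<subseteq> S} = (card R - b) choose (a - b)"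
      using assms(1,3,4) card_ksets_supersets[of R T b a] by (auto simp: ksets_def)
  qed
  ultimately show ?thesis by simp
qed

lemma shadow_card_le:
  assumes "finite R" "A \<subseteq> ksets R a" "B \<subseteq> ksets R b" "b \<le> a" "a \<le> card R"
    and "\<And>S T. S \<in> A \<Longrightarrow> T \<subseteq> S \<Longrightarrow> card T = b \<Longrightarrow> T \<in> B"
  shows "card A * (card R choose b) \<le> card B * (card R choose a)"
proof -
  define m where "m = card R"
  have "card A * (m choose b) * (a choose b) \<le> card B * ((m - b) choose (a - b)) * (m choose b)"
    using shadow_double_count[OF assms(1-4,6)] unfolding m_def by (simp add: ac_simps)
  also have "\<dots> = card B * (m choose a) * (a choose b)"
    using choose_mult[of b a m] assms(4,5) unfolding m_def by (simp add: ac_simps)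
  finally show ?thesis
    using assms(4) unfolding m_def by simp
qed

lemma weighted_constraints_sum_le:
  fixes x1 x2 y1 y2 Na Nb :: nat
  assumes "0 < Nb" "Nb \<le> Na"
    and h1: "y1 * Na + x1 * Nb \<le> Na * Nb" and h2: "y2 * Na + x2 * Nb \<le> Na * Nb"
    and h3: "x2 * Nb \<le> y1 * Na"
  shows "x1 + x2 + y1 + y2 \<le> Na + Nb"
proof -
  define s where "s = x1 + x2"
  have "s * Nb \<le> Na * Nb" using h1 h3 by (simp add: s_def algebra_simps)
  then have "s \<le> Na" using \<open>0 < Nb\<close> by simp
  then have "s * Na - s * Nb \<le> Na * Na - Na * Nb"
    using mult_right_mono[of s Na "Na - Nb"] by (simp add: diff_mult_distrib2)
  moreover have "s * Nb \<le> s * Na" "Na * Nb \<le> Na * Na" using \<open>Nb \<le> Na\<close> by simp_all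
  ultimately have "s * Na + Na * Nb \<le> Na * Na + s * Nb" by arith
  with h1 h2 have "(x1 + x2 + y1 + y2) * Na \<le> (Na + Nb) * Na"
    by (simp add: s_def algebra_simps)
  then show ?thesis using \<open>0 < Nb\<close> \<open>Nb \<le> Na\<close> by simp
qed

lemma sorted_list_of_set_nth_less_iff:
  assumes "finite X" "l < card X" "j < card X"
  shows "sorted_list_of_set X ! l < sorted_list_of_set X ! j \<longleftrightarrow> l < j"
proof -
  have "sorted_wrt (<) (sorted_list_of_set X)" by simp
  then show ?thesis
    using assms sorted_wrt_nth_less[where P = "(<)"]
      by (metis length_sorted_list_of_set less_asym linorder_neqE_nat)
qed

lemma card_less_nth_sorted_list_of_set:
  assumes "finite X" "j < card X"
  shows "card {x \<in> X. x < sorted_list_of_set X ! j} = j"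
proof -
  let ?xs = "sorted_list_of_set X"
  have "{x \<in> X. x < ?xs ! j} = (\<lambda>l. ?xs ! l) ` {..<j}"
  proof (intro set_eqI iffI)
    fix x assume "x \<in> {x \<in> X. x < ?xs ! j}"
    moreover obtain l where "l < card X" "x = ?xs ! l"
      using calculation assms(1)
        by (metis (no_types, lifting) in_set_conv_nth length_sorted_list_of_set mem_Collect_eq set_sorted_list_of_set)
    ultimately show "x \<in> (\<lambda>l. ?xs ! l) ` {..<j}"
      using sorted_list_of_set_nth_less_iff assms by auto
  next
    fix x assume "x \<in> (\<lambda>l. ?xs ! l) ` {..<j}"
    then obtain l where "l < j" "x = ?xs ! l" by auto
    then show "x \<in> {x \<in> X. x < ?xs ! j}"
      using sorted_list_of_set_nth_less_iff[OF assms(1) _ assms(2), of l] assms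
     
        by (metis (mono_tags, lifting) length_sorted_list_of_set mem_Collect_eq nth_mem order.strict_trans set_sorted_list_of_set)
  qed
  moreover have "inj_on (\<lambda>l. ?xs ! l) {..<j}"
    using assms by (intro inj_onI) (simp add: nth_eq_iff_index_eq)
  ultimately show ?thesis by (simp add: card_image)
qed

lemma sorted_list_of_set_nth_le_iff:
  fixes X :: "nat set"
  assumes "finite X" "j < card X"
  shows "sorted_list_of_set X ! j \<le> t \<longleftrightarrow> j < card {x \<in> X. x \<le> t}"
proof
  let ?x = "sorted_list_of_set X ! j"
  have "?x \<in> X" using assms by (metis length_sorted_list_of_set nth_mem set_sorted_list_of_set)
  show "j < card {x \<in> X. x \<le> t}" if "?x \<le> t"
  proof -
    have "insert ?x {x \<in> X. x < ?x} \<subseteq> {x \<in> X. x \<le> t}" using \<open>?x \<in> X\<close> that by auto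
    then have "card (insert ?x {x \<in> X. x < ?x}) \<le> card {x \<in> X. x \<le> t}"
      using assms(1) by (intro card_mono) auto
    then show ?thesis using card_less_nth_sorted_list_of_set[OF assms] assms(1) by simp
  qed
  show "?x \<le> t" if "j < card {x \<in> X. x \<le> t}"
  proof (rule ccontr)
    assume "\<not> ?x \<le> t"
    then have "card {x \<in> X. x \<le> t} \<le> card {x \<in> X. x < ?x}"
      using assms(1) by (intro card_mono) auto
    then show False using that card_less_nth_sorted_list_of_set[OF assms] by simp
  qed
qed
lemma shift_le_if_counts_le:
  fixes X Y :: "nat set"
  assumes "finite X" "finite Y" "card X = card Y"
    and c: "\<And>t. card {y\<in>Y. y \<le> t} \<le> card {x\<in>X. x \<le> t}"
  shows "shift_le X Y"
  unfolding shift_le_def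
proof (intro conjI allI impI)
  fix j assume j: "j < card X"
  let ?t = "sorted_list_of_set Y ! j"
  have "j < card {y\<in>Y. y \<le> ?t}" using sorted_list_of_set_nth_le_iff[of Y j ?t] assms j by simp
  also have "\<dots> \<le> card {x\<in>X. x \<le> ?t}" by (rule c)
  finally show "sorted_list_of_set X ! j \<le> ?t" using sorted_list_of_set_nth_le_iff[of X j ?t] assms j by simp
qed (use assms in auto)

lemma shift_le_replace_top:
  fixes L1 L2 T E :: "nat set"
  assumes fin: "finite L2" "finite E" and sub: "L1 \<subseteq> L2" "T \<subseteq> E"
    and lt: "\<forall>x\<in>L2. \<forall>y\<in>E. x < y"
    and cd: "card L2 + card T = card L1 + card E"
  shows "shift_le (L2 \<union> T) (L1 \<union> E)"
proof -
  have fL1: "finite L1" and fT: "finite T" using fin sub finite_subset by auto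
  have dX: "L2 \<inter> T = {}" and dY: "L1 \<inter> E = {}" using lt sub by fastforce+
  show ?thesis
  proof (rule shift_le_if_counts_le)
    show "finite (L2 \<union> T)" "finite (L1 \<union> E)" using fin fL1 fT by auto
    show "card (L2 \<union> T) = card (L1 \<union> E)" using fin fL1 fT dX dY cd by (simp add: card_Un_disjoint)
  next
    fix t
    show "card {y \<in> L1 \<union> E. y \<le> t} \<le> card {x \<in> L2 \<union> T. x \<le> t}"
    proof (cases "\<exists>e\<in>E. e \<le> t")
      case False
      then have "{y \<in> L1 \<union> E. y \<le> t} \<subseteq> {x \<in> L2 \<union> T. x \<le> t}" using sub by auto
      then show ?thesis by (rule card_mono[rotated]) (use fin fT in auto)
    next
      case True
      then have L2t: "\<forall>x\<in>L2. x \<le> t" using lt by force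
      have e1: "{y \<in> L1 \<union> E. y \<le> t} = L1 \<union> {y\<in>E. y \<le> t}" using L2t sub by auto
      have e2: "{x \<in> L2 \<union> T. x \<le> t} = L2 \<union> {y\<in>T. y \<le> t}" using L2t by auto
      have c1: "card (L1 \<union> {y\<in>E. y \<le> t}) = card L1 + card {y\<in>E. y \<le> t}"
        using fL1 fin dY by (intro card_Un_disjoint) auto
      have c2: "card (L2 \<union> {y\<in>T. y \<le> t}) = card L2 + card {y\<in>T. y \<le> t}"
        using fT fin dX by (intro card_Un_disjoint) auto
      have "{y\<in>E. y \<le> t} \<subseteq> {y\<in>T. y \<le> t} \<union> (E - T)" by auto
      then have "card {y\<in>E. y \<le> t} \<le> card ({y\<in>T. y \<le> t} \<union> (E - T))"
        by (rule card_mono[rotated]) (use fin fT in auto)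
      also have "\<dots> \<le> card {y\<in>T. y \<le> t} + card (E - T)" by (rule card_Un_le)
      also have "card (E - T) = card E - card T" using sub fT by (simp add: card_Diff_subset)
      finally have "card {y\<in>E. y \<le> t} \<le> card {y\<in>T. y \<le> t} + (card E - card T)" .
      moreover have "card T \<le> card E" using sub fin by (simp add: card_mono)
      ultimately show ?thesis unfolding e1 e2 c1 c2 using cd by linarith
    qed
  qed
qed

lemma restr_subset_ksets:
  assumes "F \<subseteq> ksets {1..n} k" "P \<subseteq> {1..k+1}"
  shows "restr k F P \<subseteq> ksets {k+2..n} (k - card P)"
proof
  fix S assume "S \<in> restr k F P"
  then obtain A where A: "A \<in> F" "A \<inter> {1..k+1} = P" "S = A - P" by (auto simp: restr_def)
  then have "A \<subseteq> {1..n}" "card A = k" "P \<subseteq> A" using assms(1) by (auto simp: ksets_def)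
  moreover have "finite A" using \<open>A \<subseteq> {1..n}\<close> finite_subset by blast
  ultimately show "S \<in> ksets {k+2..n} (k - card P)"
    using A by (auto simp: ksets_def card_Diff_subset finite_subset)
qed

lemma cross_intersecting_restr:
  assumes "cross_intersecting F G" "P \<inter> P' = {}"
  shows "cross_intersecting (restr k F P) (restr k G P')"
  unfolding cross_intersecting_def
proof (intro ballI)
  fix S T assume "S \<in> restr k F P" "T \<in> restr k G P'"
  then obtain A B where A: "A \<in> F" "A \<inter> {1..k+1} = P" "S = A - P"
    and B: "B \<in> G" "B \<inter> {1..k+1} = P'" "T = B - P'" by (auto simp: restr_def)
  obtain x where "x \<in> A" "x \<in> B" using assms(1) A B unfolding cross_intersecting_def by blast
  moreover have "x \<notin> {1..k+1}" using calculation A B assms(2) by blast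
  ultimately show "S \<inter> T \<noteq> {}" using A B by auto
qed

text \<open>A tail T of S extended by P' is obtained from P \<union> S by replacing the elements of S - T
  with the smaller elements of P' - P, so it belongs to F by initiality.\<close>

lemma initial_restr_shadow:
  assumes F: "F \<subseteq> ksets {1..n} k" and "initial n k F"
    and P: "P \<subseteq> P'" "P' \<subseteq> {1..k+1}" and "k < n"
    and S: "S \<in> restr k F P" and T: "T \<subseteq> S" "card P' + card T = k"
  shows "T \<in> restr k F P'"
proof -
  obtain A where A: "A \<in> F" "A \<inter> {1..k+1} = P" "S = A - P" using S by (auto simp: restr_def)
  have "A \<subseteq> {1..n}" "card A = k" using A F by (auto simp: ksets_def)
  then have "finite A" using finite_subset by blast
  have "P \<subseteq> A" "A = P \<union> S" "S \<subseteq> {k+2..n}" using A \<open>A \<subseteq> {1..n}\<close> by auto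
  have "finite S" "finite P'" "finite T"
    using \<open>S \<subseteq> {k+2..n}\<close> P(2) T(1) finite_subset
      by (metis finite_atLeastAtMost)+
  have "card P \<le> k" using \<open>P \<subseteq> A\<close> \<open>finite A\<close> \<open>card A = k\<close> card_mono by blast
  moreover have "card S = k - card P"
    using A(3) \<open>P \<subseteq> A\<close> \<open>finite A\<close> \<open>card A = k\<close> by (simp add: card_Diff_subset finite_subset)
  ultimately have "card S + card P = k" by simp
  have below: "\<forall>x\<in>P'. \<forall>y\<in>S. x < y" using P(2) \<open>S \<subseteq> {k+2..n}\<close> by fastforce
  have disjoint: "P' \<inter> T = {}" using below T(1) by blast
  have "shift_le (P' \<union> T) (P \<union> S)"
    using shift_le_replace_top[OF \<open>finite P'\<close> \<open>finite S\<close> P(1) T(1) below]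
      T(2) \<open>card S + card P = k\<close> by simp
  moreover have "P' \<union> T \<in> ksets {1..n} k"
    using disjoint P(2) T \<open>S \<subseteq> {k+2..n}\<close> \<open>k < n\<close> \<open>finite P'\<close> \<open>finite T\<close>
    by (auto simp: ksets_def card_Un_disjoint)
  ultimately have "P' \<union> T \<in> F"
    using \<open>initial n k F\<close> A(1) \<open>A = P \<union> S\<close> unfolding initial_def by metis
  moreover have "(P' \<union> T) \<inter> {1..k+1} = P'" "T = (P' \<union> T) - P'"
    using disjoint P(2) T(1) \<open>S \<subseteq> {k+2..n}\<close> by auto
  ultimately show ?thesis unfolding restr_def by blast
qed

theorem lemma3p2:
  fixes n k i :: nat and F G :: "nat set set" and P Q :: "nat set"
  assumes "4 \<le> 2 * k" and "2 * k \<le> n"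
    and "F \<subseteq> ksets {1..n} k" and "G \<subseteq> ksets {1..n} k"
    and "non_trivial F" and "non_trivial G"
    and "cross_intersecting F G"
    and "initial n k F" and "initial n k G"
    and "2 \<le> i" and "2 * i \<le> k"
    and "P \<in> ksets {1..k+1} i" and "Q \<in> ksets {1..k+1} i" and "P \<inter> Q = {}"
  shows "card (restr k F P) + card (restr k G Q) + card (restr k G ({1..k+1} - P))
           + card (restr k F ({1..k+1} - Q))
         \<le> ((n - k - 1) choose (k - i)) + ((n - k - 1) choose (i - 1))"
proof -
  define R m a b where "R = {k+2..n}" and "m = n - k - 1" and "a = k - i" and "b = i - 1"
  define P' Q' where "P' = {1..k+1} - P" and "Q' = {1..k+1} - Q"
  have R: "finite R" "card R = m" and ab: "b \<le> a" "a + b \<le> m"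
    using assms(1,2,10,11) by (auto simp: R_def m_def a_def b_def)
  have P: "P \<subseteq> {1..k+1}" "card P = i" and Q: "Q \<subseteq> {1..k+1}" "card Q = i"
    using assms(12,13) by (auto simp: ksets_def)
  have P': "P' \<subseteq> {1..k+1}" "card P' = k + 1 - i" and Q': "Q' \<subseteq> {1..k+1}" "card Q' = k + 1 - i"
    using P Q by (auto simp: P'_def Q'_def card_Diff_subset finite_subset)
  have "k - (k + 1 - i) = b" "k < n" using assms(1,2,10,11) by (auto simp: b_def)
  have families: "restr k F P \<subseteq> ksets R a" "restr k G Q \<subseteq> ksets R a"
      "restr k G P' \<subseteq> ksets R b" "restr k F Q' \<subseteq> ksets R b"
    using restr_subset_ksets[OF assms(3) P(1)] restr_subset_ksets[OF assms(4) Q(1)]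
      restr_subset_ksets[OF assms(4) P'(1)] restr_subset_ksets[OF assms(3) Q'(1)]
      P Q P' Q' \<open>k - (k + 1 - i) = b\<close> by (simp_all add: R_def a_def)
  have "Q \<subseteq> P'" "card P' + b = k" using assms(10,11,14) Q P' by (auto simp: P'_def b_def)
  then have shadow:
      "\<And>S T. S \<in> restr k G Q \<Longrightarrow> T \<subseteq> S \<Longrightarrow> card T = b \<Longrightarrow> T \<in> restr k G P'"
    using initial_restr_shadow[OF assms(4,9) _ P'(1) \<open>k < n\<close>] by blast
  have cross: "cross_intersecting (restr k F P) (restr k G P')"
      "cross_intersecting (restr k G Q) (restr k F Q')"
    using cross_intersecting_restr[OF assms(7), of P P' k]
      cross_intersecting_restr[OF assms(7), of Q' Q k]
    by (auto simp: P'_def Q'_def cross_intersecting_commute)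
  have "a + b \<le> card R" "a \<le> card R" using ab R(2) by simp_all
  note bounds = cross_intersecting_card_le[OF R(1) families(1,3) cross(1) this(1)]
    cross_intersecting_card_le[OF R(1) families(2,4) cross(2) this(1)]
    shadow_card_le[OF R(1) families(2,3) ab(1) this(2) shadow]
  have "0 < m choose b" using ab by simp
  then have "card (restr k F P) + card (restr k G Q) + card (restr k G P') + card (restr k F Q')
      \<le> (m choose a) + (m choose b)"
    using bounds unfolding R(2) by (rule weighted_constraints_sum_le[OF _ binomial_le_binomial[OF ab]])
  then show ?thesis unfolding P'_def Q'_def m_def a_def b_def .
qed

end
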